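(* In $\mathrm{Leib}$, for every $n\ge0$ and $0\le i\le j\le n$, \[\rho_i^{n+1}\rho_j^n=\rho_{j+1}^{n+1}\rho_i^n.\]
   Context: Let $\Bbbk$ be a field and $\mathbb{K}=\bigoplus_{n\in\mathbb N}\Bbbk1_n$ with $1_n1_m=\delta_{nm}1_n$. A $\mathbb K$-algebra is the categorical algebra of a small $\Bbbk$-linear category with object set $\mathbb N$. Generators: $\partial^n_j$ ($n\ge0$, $0\le j\le n$), a morphism $n\to n+1$, and $\chi^n_i$ ($n\ge1$, $0\le i\le n-1$), an endomorphism of $n$; products with mismatched degrees are $0$. $\mathrm{Mag}$: free on the $\partial^n_j$ modulo $\partial^{n+1}_i\partial^n_j=\partial^{n+1}_{j+1}\partial^n_i$ ($0\le i<j\le n$). $\mathrm{Sym}$: free on the $\chi^n_i$ modulo $\chi^n_i\chi^n_j=\chi^n_j\chi^n_i$ ($|i-j|\ge2$), $\chi^n_i\chi^n_{i+1}\chi^n_i=\chi^n_{i+1}\chi^n_i\chi^n_{i+1}$, $\chi^n_i\chi^n_i=1_n$. $\mathrm{Sym}\otimes_\zeta\mathrm{Mag}$: generated by both with underlying bimodule $\mathrm{Sym}\otimes_{\mathbb K}\mathrm{Mag}$ and relations $\partial_i^n\chi_j^n=\chi^{n+1}_{j+1}\partial^n_i$ ($i<j$), $\chi^{n+1}_{i+1}\chi^{n+1}_i\partial^n_{i+1}$ ($i=j$), $\chi^{n+1}_{i-1}\chi^{n+1}_i\partial^n_{i-1}$ ($i=j+1$), $\chi^{n+1}_j\partial^n_i$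 ($i>j+1$). $\mathrm{Leib}$ is the quotient of $\mathrm{Sym}\otimes_\zeta\mathrm{Mag}$ by the ideal generated by $\partial^{n+1}_{j+1}\partial^n_j-(1_{n+2}-\chi^{n+2}_{j+1})\partial^{n+1}_j\partial^n_j$, $0\le j\le n$. In $\mathrm{Leib}$, $\rho^n_{-1}:=0$ and $\rho^n_j:=\partial^n_j+\sum_{a=1}^j\chi^{n+1}_j\cdots\chi^{n+1}_a\partial^n_{a-1}$ for $0\le j\le n$. *)

theory Defs
  imports Main
begin

text \<open>Generators of the free K-algebra (path algebra of the quiver with vertex set nat):
  D n j is the generator \<partial>^n_j : n \<rightarrow> n+1 (valid iff j \<le> n),
  X n i is the generator \<chi>^n_i : n \<rightarrow> n (valid iff i < n, so n \<ge> 1).\<close>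

datatype gen = D nat nat | X nat nat

fun gsrc :: "gen \<Rightarrow> nat" where
  "gsrc (D n j) = n" | "gsrc (X n i) = n"

fun gtgt :: "gen \<Rightarrow> nat" where
  "gtgt (D n j) = Suc n" | "gtgt (X n i) = n"

fun gvalid :: "gen \<Rightarrow> bool" where
  "gvalid (D n j) = (j \<le> n)" | "gvalid (X n i) = (i < n)"

text \<open>A path is (source object, word); the word [g1,...,gk] denotes the product g1 g2 ... gk,
  i.e. gk is applied first. The empty word at n denotes the idempotent 1_n.\<close>

type_synonym path = "nat \<times> gen list"

fun wvalid :: "nat \<Rightarrow> gen list \<Rightarrow> bool" where
  "wvalid n [] = True"
| "wvalid n [g] = (gvalid g \<and> gsrc g = n)"
| "wvalid n (g # h # ws) = (gvalid g \<and> gsrc g = gtgt h \<and> wvalid n (h # ws))"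

fun pvalid :: "path \<Rightarrow> bool" where
  "pvalid (n, ws) = wvalid n ws"

fun ptgt :: "path \<Rightarrow> nat" where
  "ptgt (n, []) = n"
| "ptgt (n, g # ws) = gtgt g"

text \<open>Formal linear combinations of paths, their product (non-composable products are 0),
  and the element of the free algebra (coefficient function) they denote.\<close>

type_synonym 'k fl = "('k \<times> path) list"

definition fmul :: "'k::times fl \<Rightarrow> 'k fl \<Rightarrow> 'k fl" where
  "fmul xs ys = concat (map (\<lambda>(c, (n, ws)). concat (map (\<lambda>(d, (m, vs)).
      if ptgt (m, vs) = n then [(c * d, (m, ws @ vs))] else []) ys)) xs)"

definition lc :: "'k::comm_monoid_add fl \<Rightarrow> path \<Rightarrow> 'k" where
  "lc xs p = sum_list (map fst (filter (\<lambda>(c, q). q = p) xs))"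

definition mon :: "nat \<Rightarrow> gen list \<Rightarrow> 'k::one fl" where
  "mon n ws = [(1, (n, ws))]"

definition fneg :: "'k::uminus fl \<Rightarrow> 'k fl" where
  "fneg xs = map (\<lambda>(c, p). (- c, p)) xs"

inductive_set leib_rel :: "'k::field fl set" where
  mag: "i < j \<Longrightarrow> j \<le> n \<Longrightarrow>
     mon n [D (Suc n) i, D n j] @ fneg (mon n [D (Suc n) (Suc j), D n i]) \<in> leib_rel"
| sym_comm: "i < n \<Longrightarrow> j < n \<Longrightarrow> i + 2 \<le> j \<or> j + 2 \<le> i \<Longrightarrow>
     mon n [X n i, X n j] @ fneg (mon n [X n j, X n i]) \<in> leib_rel"
| sym_braid: "Suc i < n \<Longrightarrow>
     mon n [X n i, X n (Suc i), X n i] @ fneg (mon n [X n (Suc i), X n i, X n (Suc i)]) \<in> leib_rel"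
| sym_inv: "i < n \<Longrightarrow> mon n [X n i, X n i] @ fneg (mon n []) \<in> leib_rel"
| zeta1: "i < j \<Longrightarrow> j < n \<Longrightarrow>
     mon n [D n i, X n j] @ fneg (mon n [X (Suc n) (Suc j), D n i]) \<in> leib_rel"
| zeta2: "i < n \<Longrightarrow>
     mon n [D n i, X n i] @ fneg (mon n [X (Suc n) (Suc i), X (Suc n) i, D n (Suc i)]) \<in> leib_rel"
| zeta3: "j < n \<Longrightarrow>
     mon n [D n (Suc j), X n j] @ fneg (mon n [X (Suc n) j, X (Suc n) (Suc j), D n j]) \<in> leib_rel"
| zeta4: "Suc j < i \<Longrightarrow> i \<le> n \<Longrightarrow>
     mon n [D n i, X n j] @ fneg (mon n [X (Suc n) j, D n i]) \<in> leib_rel"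
| leib: "j \<le> n \<Longrightarrow>
     mon n [D (Suc n) (Suc j), D n j] @ fneg (mon n [D (Suc n) j, D n j])
       @ mon n [X (Suc (Suc n)) (Suc j), D (Suc n) j, D n j] \<in> leib_rel"

inductive_set leib_ideal :: "(path \<Rightarrow> 'k::field) set" where
  zero: "(\<lambda>_. 0) \<in> leib_ideal"
| gen: "r \<in> leib_rel \<Longrightarrow> pvalid u \<Longrightarrow> pvalid v \<Longrightarrow>
     lc (fmul [(1, u)] (fmul r [(1, v)])) \<in> leib_ideal"
| lin: "a \<in> leib_ideal \<Longrightarrow> b \<in> leib_ideal \<Longrightarrow> (\<lambda>p. a p + c * b p) \<in> leib_ideal"

definition leib_eq :: "'k::field fl \<Rightarrow> 'k fl \<Rightarrow> bool" where
  "leib_eq x y \<longleftrightarrow> lc x - lc y \<in> leib_ideal"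

definition rho :: "nat \<Rightarrow> nat \<Rightarrow> 'k::one fl" where
  "rho n j = mon n [D n j] @
     concat (map (\<lambda>a. mon n (map (X (Suc n)) (rev [a..<Suc j]) @ [D n (a - 1)])) [1..<Suc j])"

end

theory Submission
  imports Defs "HOL-Library.Function_Algebras"
begin

text \<open>By definition \<open>\<rho>\<^sup>n\<^sub>j = \<partial>\<^sup>n\<^sub>j + \<chi>\<^sup>n\<^sup>+\<^sup>1\<^sub>j \<rho>\<^sup>n\<^sub>j\<^sub>-\<^sub>1\<close>, and the identity follows by induction on \<open>i\<close>
  from two families of commutation rules, each proved by induction from the defining relations:
  \<open>\<partial>\<^sub>i \<rho>\<^sub>j = \<rho>\<^sub>j\<^sub>+\<^sub>1 \<partial>\<^sub>i\<close> for \<open>i \<le> j\<close> (from Mag and \<open>\<zeta>\<close>, and the Leibniz relation for \<open>i = j\<close>), and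
  \<open>\<rho>\<^sub>k \<chi>\<^sub>i = \<chi>\<^sub>i\<^sub>+\<^sub>1 \<rho>\<^sub>k\<close> for \<open>k < i\<close>, \<open>\<rho>\<^sub>k \<chi>\<^sub>i = \<chi>\<^sub>i \<rho>\<^sub>k\<close> for \<open>i < k\<close> (from \<open>\<zeta>\<close> and Sym).
  The computations take place in the path algebra; the ideal is closed under multiplication by
  paths on either side, so equality in Leib is a congruence.\<close>

section \<open>Formal sums of paths\<close>

lemma lc_Nil [simp]: "lc [] = 0"
  by (simp add: lc_def fun_eq_iff)

lemma lc_append [simp]: "lc (x @ y) = lc x + lc y"
  by (simp add: lc_def fun_eq_iff)

lemma lc_fneg [simp]: "lc (fneg x :: 'k::ab_group_add fl) = - lc x"
  by (induction x) (auto simp: fneg_def lc_def fun_eq_iff)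

lemma lc_Cons: "lc (e # x) = lc [e] + lc x"
  using lc_append[of "[e]" x] by simp

lemma lc_singleton: "lc [(d, q)] p = (if p = q then d else 0)"
  by (simp add: lc_def)

lemma fmul_Nil_left [simp]: "fmul [] y = []"
  by (simp add: fmul_def)

lemma fmul_Nil_right [simp]: "fmul x [] = []"
  by (induction x) (auto simp: fmul_def)

lemma fmul_Cons_left: "fmul (a # x) y = fmul [a] y @ fmul x y"
  by (simp add: fmul_def)

lemma fmul_append_left [simp]: "fmul (x @ z) y = fmul x y @ fmul z y"
  by (simp add: fmul_def)

lemma fmul_singleton_Cons: "fmul [a] (b # y) = fmul [a] [b] @ fmul [a] y"
  by (simp add: fmul_def split: prod.splits)

lemma fmul_singleton_append: "fmul [a] (y @ z) = fmul [a] y @ fmul [a] z"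
  by (simp add: fmul_def split: prod.splits)

lemma fmul_singletons: "fmul [(c, (n, ws))] [(d, (m, vs))] =
   (if ptgt (m, vs) = n then [(c * d, (m, ws @ vs))] else [])"
  by (simp add: fmul_def)

lemma ptgt_append: "ptgt (k, vs) = m \<Longrightarrow> ptgt (k, ws @ vs) = ptgt (m, ws)"
  by (cases ws) auto

lemma fmul_assoc_singletons:
  "fmul (fmul [a] [b]) [c::'k::semigroup_mult \<times> path] = fmul [a] (fmul [b] [c])"
  by (cases a; cases b; cases c) (simp add: fmul_singletons ptgt_append mult.assoc)

lemma fmul_assoc_singleton2:
  "fmul (fmul [a] [b]) (z::'k::semigroup_mult fl) = fmul [a] (fmul [b] z)"
proof (induction z)
  case (Cons c z)
  have "fmul (fmul [a] [b]) (c # z) = fmul (fmul [a] [b]) [c] @ fmul (fmul [a] [b]) z"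
    by (cases a; cases b) (simp add: fmul_def)
  also have "\<dots> = fmul [a] (fmul [b] [c]) @ fmul [a] (fmul [b] z)"
    using Cons fmul_assoc_singletons by simp
  also have "\<dots> = fmul [a] (fmul [b] (c # z))"
    by (simp only: fmul_singleton_Cons[of b c z] fmul_singleton_append)
  finally show ?case .
qed simp

lemma fmul_assoc_singleton:
  "fmul (fmul [a] y) (z::'k::semigroup_mult fl) = fmul [a] (fmul y z)"
proof (induction y)
  case (Cons b y)
  show ?case
    by (simp only: fmul_singleton_Cons[of a b y] fmul_Cons_left[of b y z] fmul_singleton_append
        fmul_append_left Cons fmul_assoc_singleton2)
qed simp

lemma fmul_assoc: "fmul (fmul x y) (z::'k::semigroup_mult fl) = fmul x (fmul y z)"
proof (induction x)
  case (Cons a x)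
  have "fmul (fmul (a # x) y) z = fmul (fmul [a] y) z @ fmul (fmul x y) z"
    by (simp only: fmul_Cons_left[of a x y] fmul_append_left)
  also have "\<dots> = fmul (a # x) (fmul y z)"
    by (simp only: fmul_assoc_singleton Cons.IH fmul_Cons_left[of a x "fmul y z"])
  finally show ?case .
qed simp

lemma lc_fmul_Cons_right: "lc (fmul x (e # z)) = lc (fmul x [e]) + lc (fmul x z)"
proof (induction x)
  case (Cons a x)
  then show ?case
    by (simp only: fmul_Cons_left[of a x] fmul_singleton_Cons[of a e z] lc_append add_ac)
qed simp

lemma lc_fmul_append_right:
  "lc (fmul x (y @ z)) = lc (fmul x y) + lc (fmul x (z :: 'k::comm_semiring_0 fl))"
proof (induction y)
  case (Cons e y)
  have "lc (fmul x ((e # y) @ z)) = lc (fmul x [e]) + lc (fmul x (y @ z))"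
    by (simp only: append_Cons lc_fmul_Cons_right[of x e "y @ z"])
  also have "\<dots> = lc (fmul x (e # y)) + lc (fmul x z)"
    by (simp only: Cons.IH lc_fmul_Cons_right[of x e y] add_ac)
  finally show ?case .
qed simp

section \<open>Multiplication by a path and the ideal\<close>

lemma wvalid_append:
  "wvalid m ws \<Longrightarrow> wvalid k vs \<Longrightarrow> ptgt (k, vs) = m \<Longrightarrow> wvalid k (ws @ vs)"
proof (induction m ws rule: wvalid.induct)
  case (2 n g)
  then show ?case by (cases vs) auto
qed simp_all

lemma pvalid_append:
  "pvalid (m, ws) \<Longrightarrow> pvalid (k, vs) \<Longrightarrow> ptgt (k, vs) = m \<Longrightarrow> pvalid (k, ws @ vs)"
  using wvalid_append by simp

text \<open>The effect of multiplying by the path \<open>w\<close> on the left (resp.\ right) on coefficient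
  functions: a path contributes iff it factors through \<open>w\<close>.\<close>

definition lmult :: "path \<Rightarrow> (path \<Rightarrow> 'k::zero) \<Rightarrow> path \<Rightarrow> 'k" where
  "lmult w f p =
    (if take (length (snd w)) (snd p) = snd w \<and> ptgt (fst p, drop (length (snd w)) (snd p)) = fst w
     then f (fst p, drop (length (snd w)) (snd p)) else 0)"

definition rmult :: "path \<Rightarrow> (path \<Rightarrow> 'k::zero) \<Rightarrow> path \<Rightarrow> 'k" where
  "rmult v f p =
    (if fst p = fst v \<and> length (snd v) \<le> length (snd p)
        \<and> drop (length (snd p) - length (snd v)) (snd p) = snd v
     then f (ptgt v, take (length (snd p) - length (snd v)) (snd p)) else 0)"

lemma lmult_add: "lmult w (f + g) p = lmult w f p + (lmult w g p :: 'k::monoid_add)"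
  by (simp add: lmult_def)

lemma lmult_diff: "lmult w (f - g) p = lmult w f p - (lmult w g p :: 'k::ab_group_add)"
  by (simp add: lmult_def)

lemma rmult_add: "rmult w (f + g) p = rmult w f p + (rmult w g p :: 'k::monoid_add)"
  by (simp add: rmult_def)

lemma rmult_diff: "rmult w (f - g) p = rmult w f p - (rmult w g p :: 'k::ab_group_add)"
  by (simp add: rmult_def)

lemma append_eq_iff_take_drop:
  "zs = ws @ vs \<longleftrightarrow> take (length ws) zs = ws \<and> drop (length ws) zs = vs"
  by (metis append_eq_conv_conj)

lemma append_eq_iff_take_drop_right:
  "zs = ws @ vs \<longleftrightarrow> length vs \<le> length zs \<and> drop (length zs - length vs) zs = vs
     \<and> take (length zs - length vs) zs = ws"
  by (metis append_eq_conv_conj append_take_drop_id diff_add_inverse2 le_add2 length_append)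

lemma lc_fmul_singletons_lmult:
  "lc (fmul [(c, (m, ws))] [(d, (k, vs))]) p
     = c * lmult (m, ws) (lc [(d, (k, vs)) :: 'k::{comm_monoid_add,mult_zero} \<times> path]) p"
proof (cases p)
  case (Pair k' zs)
  have "lc (fmul [(c, (m, ws))] [(d, (k, vs))]) p
      = (if ptgt (k, vs) = m \<and> k' = k \<and> zs = ws @ vs then c * d else 0)"
    by (simp add: fmul_singletons lc_singleton Pair)
  also have "\<dots> = c * lmult (m, ws) (lc [(d, (k, vs))]) p"
    unfolding lmult_def lc_singleton Pair using append_eq_iff_take_drop[of zs ws vs] by auto
  finally show ?thesis .
qed

lemma lc_fmul_singletons_rmult:
  "lc (fmul [(d, (m, ws))] [(c, (k, vs))]) p
     = rmult (k, vs) (lc [(d, (m, ws)) :: 'k::{comm_monoid_add,mult_zero} \<times> path]) p * c"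
proof (cases p)
  case (Pair k' zs)
  have "lc (fmul [(d, (m, ws))] [(c, (k, vs))]) p
      = (if ptgt (k, vs) = m \<and> k' = k \<and> zs = ws @ vs then d * c else 0)"
    by (simp add: fmul_singletons lc_singleton Pair)
  also have "\<dots> = rmult (k, vs) (lc [(d, (m, ws))]) p * c"
    unfolding rmult_def lc_singleton Pair using append_eq_iff_take_drop_right[of zs ws vs] by auto
  finally show ?thesis .
qed

lemma lc_fmul_singleton_left:
  "lc (fmul [(c, w)] x) = (\<lambda>p. c * lmult w (lc x) p :: 'k::comm_semiring_0)"
proof (induction x)
  case Nil
  then show ?case by (simp add: lmult_def fun_eq_iff)
next
  case (Cons e x)
  obtain d k vs where e: "e = (d, k, vs)" by (cases e)
  obtain m ws where w: "w = (m, ws)" by (cases w)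
  have "lc (fmul [(c, w)] (e # x)) = lc (fmul [(c, w)] [e]) + lc (fmul [(c, w)] x)"
    by (simp only: fmul_singleton_Cons[of _ e x] lc_append)
  also have "\<dots> = (\<lambda>p. c * lmult w (lc [e]) p) + (\<lambda>p. c * lmult w (lc x) p)"
    using lc_fmul_singletons_lmult[of c m ws d k vs] Cons by (simp add: e w fun_eq_iff)
  also have "\<dots> = (\<lambda>p. c * lmult w (lc (e # x)) p)"
    unfolding lc_Cons[of e x] by (simp add: fun_eq_iff lmult_add distrib_left)
  finally show ?case .
qed

lemma lc_fmul_singleton_right:
  "lc (fmul x [(c, v)]) = (\<lambda>p. rmult v (lc x) p * c :: 'k::comm_semiring_0)"
proof (induction x)
  case Nil
  then show ?case by (simp add: rmult_def fun_eq_iff)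
next
  case (Cons e x)
  obtain d k vs where e: "e = (d, k, vs)" by (cases e)
  obtain m ws where v: "v = (m, ws)" by (cases v)
  have "lc (fmul (e # x) [(c, v)]) = lc (fmul [e] [(c, v)]) + lc (fmul x [(c, v)])"
    by (simp only: fmul_Cons_left[of e x] lc_append)
  also have "\<dots> = (\<lambda>p. rmult v (lc [e]) p * c) + (\<lambda>p. rmult v (lc x) p * c)"
    using lc_fmul_singletons_rmult[of d k vs c m ws] Cons by (simp add: e v fun_eq_iff)
  also have "\<dots> = (\<lambda>p. rmult v (lc (e # x)) p * c)"
    unfolding lc_Cons[of e x] by (simp add: fun_eq_iff rmult_add distrib_right)
  finally show ?case .
qed

lemma leib_ideal_zero [simp]: "0 \<in> leib_ideal"
  using leib_ideal.zero by (simp add: zero_fun_def)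

lemma leib_ideal_add: "a \<in> leib_ideal \<Longrightarrow> b \<in> leib_ideal \<Longrightarrow> a + b \<in> leib_ideal"
  using leib_ideal.lin[of a b 1] by (simp add: plus_fun_def)

lemma leib_ideal_scale: "b \<in> leib_ideal \<Longrightarrow> (\<lambda>p. c * b p) \<in> leib_ideal"
  using leib_ideal.lin[OF leib_ideal.zero, of b c] by simp

lemma leib_ideal_uminus: "b \<in> (leib_ideal :: (path \<Rightarrow> 'k::field) set) \<Longrightarrow> - b \<in> leib_ideal"
  using leib_ideal_scale[of b "-1"] by (simp add: fun_Compl_def)

lemma fmul_idempotent_singletons:
  "fmul [(1::'k::monoid_mult, (m, ws))] [(1, (k, vs))] =
     (if ptgt (k, vs) = m then [(1, (k, ws @ vs))] else [])"
  by (simp add: fmul_singletons)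

lemma leib_ideal_lmult:
  assumes "a \<in> leib_ideal" and "pvalid w"
  shows "lmult w a \<in> (leib_ideal :: (path \<Rightarrow> 'k::field) set)"
  using assms
proof (induction rule: leib_ideal.induct)
  case zero
  have "lmult w (\<lambda>_. 0::'k) = (\<lambda>_. 0)" by (simp add: lmult_def fun_eq_iff)
  then show ?case using leib_ideal.zero by simp
next
  case (gen r u v)
  obtain m ws where w: "w = (m, ws)" by (cases w)
  obtain k us where u: "u = (k, us)" by (cases u)
  have "lmult w (lc (fmul [(1, u)] (fmul r [(1, v)])))
      = lc (fmul (fmul [(1::'k, w)] [(1, u)]) (fmul r [(1, v)]))"
    by (simp add: lc_fmul_singleton_left fmul_assoc)
  moreover have "pvalid (k, ws @ us)" if "ptgt (k, us) = m"
    using pvalid_append gen that w u by auto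
  ultimately show ?case
    using leib_ideal.gen[OF gen(1) _ gen(3)] leib_ideal.zero
    by (auto simp: w u fmul_idempotent_singletons)
next
  case (lin a b c)
  have "lmult w (\<lambda>p. a p + c * b p) = (\<lambda>p. lmult w a p + c * lmult w b p)"
    by (simp add: lmult_def fun_eq_iff)
  then show ?case using leib_ideal.lin[OF lin.IH[OF lin.prems], of c] by simp
qed

lemma leib_ideal_rmult:
  assumes "a \<in> leib_ideal" and "pvalid w"
  shows "rmult w a \<in> (leib_ideal :: (path \<Rightarrow> 'k::field) set)"
  using assms
proof (induction rule: leib_ideal.induct)
  case zero
  have "rmult w (\<lambda>_. 0::'k) = (\<lambda>_. 0)" by (simp add: rmult_def fun_eq_iff)
  then show ?case using leib_ideal.zero by simp
next
  case (gen r u v)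
  obtain m ws where v: "v = (m, ws)" by (cases v)
  obtain k us where w: "w = (k, us)" by (cases w)
  have "rmult w (lc (fmul [(1, u)] (fmul r [(1, v)])))
      = lc (fmul (fmul [(1, u)] (fmul r [(1, v)])) [(1::'k, w)])"
    by (simp add: lc_fmul_singleton_right)
  also have "\<dots> = lc (fmul [(1, u)] (fmul r (fmul [(1, v)] [(1::'k, w)])))"
    by (simp add: fmul_assoc)
  finally have "rmult w (lc (fmul [(1, u)] (fmul r [(1, v)]))) = \<dots>" .
  moreover have "pvalid (k, ws @ us)" if "ptgt (k, us) = m"
    using pvalid_append gen that w v by auto
  ultimately show ?case
    using leib_ideal.gen[OF gen(1) gen(2)] leib_ideal.zero
    by (auto simp: w v fmul_idempotent_singletons)
next
  case (lin a b c)
  have "rmult w (\<lambda>p. a p + c * b p) = (\<lambda>p. rmult w a p + c * rmult w b p)"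
    by (simp add: rmult_def fun_eq_iff)
  then show ?case using leib_ideal.lin[OF lin.IH[OF lin.prems], of c] by simp
qed

definition fvalid :: "'k fl \<Rightarrow> bool" where
  "fvalid z \<longleftrightarrow> (\<forall>e \<in> set z. pvalid (snd e))"

lemma fvalid_Nil [simp]: "fvalid []"
  by (simp add: fvalid_def)

lemma fvalid_Cons: "fvalid (e # x) \<longleftrightarrow> pvalid (snd e) \<and> fvalid x"
  by (simp add: fvalid_def)

lemma fvalid_append [simp]: "fvalid (x @ y) \<longleftrightarrow> fvalid x \<and> fvalid y"
  by (auto simp: fvalid_def)

lemma fvalid_mon [simp]: "fvalid (mon n ws) \<longleftrightarrow> wvalid n ws"
  by (simp add: fvalid_def mon_def)

lemma fvalid_fmul_singletons: "pvalid p \<Longrightarrow> pvalid q \<Longrightarrow> fvalid (fmul [(c, p)] [(d, q)])"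
proof (cases p, cases q)
  fix m ws k vs
  assume "pvalid p" "pvalid q" and pq: "p = (m, ws)" "q = (k, vs)"
  then show ?thesis
    unfolding pq fmul_singletons fvalid_def using pvalid_append[of m ws k vs] by simp
qed

lemma fvalid_fmul_singleton: "pvalid (snd a) \<Longrightarrow> fvalid y \<Longrightarrow> fvalid (fmul [a] y)"
proof (induction y)
  case (Cons b y)
  then have "fvalid (fmul [a] [b])" and "fvalid (fmul [a] y)"
    by (cases a; cases b; simp add: fvalid_Cons fvalid_fmul_singletons)+
  then show ?case by (simp only: fmul_singleton_Cons[of a b y] fvalid_append)
qed simp

lemma fvalid_fmul: "fvalid x \<Longrightarrow> fvalid y \<Longrightarrow> fvalid (fmul x y)"
proof (induction x)
  case (Cons a x)
  then have "fvalid (fmul [a] y)" and "fvalid (fmul x y)"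
    by (auto simp: fvalid_Cons intro: fvalid_fmul_singleton)
  then show ?case by (simp only: fmul_Cons_left[of a x y] fvalid_append)
qed simp

section \<open>Equality in Leib as a congruence\<close>

lemma leib_eq_refl [simp]: "leib_eq x x"
  by (simp add: leib_eq_def)

lemma leib_eq_sym: "leib_eq x y \<Longrightarrow> leib_eq y x"
  unfolding leib_eq_def using leib_ideal_uminus by fastforce

lemma leib_eq_trans [trans]: "leib_eq x y \<Longrightarrow> leib_eq y z \<Longrightarrow> leib_eq x z"
  unfolding leib_eq_def using leib_ideal_add by fastforce

lemma leib_eq_if_lc_eq: "lc x = lc y \<Longrightarrow> leib_eq x y"
  by (simp add: leib_eq_def)

lemma leib_eq_append: "leib_eq x x' \<Longrightarrow> leib_eq y y' \<Longrightarrow> leib_eq (x @ y) (x' @ y')"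
  unfolding leib_eq_def using leib_ideal_add[of "lc x - lc x'" "lc y - lc y'"]
  by (simp add: algebra_simps)

lemma leib_eq_fmul_left:
  "fvalid z \<Longrightarrow> leib_eq x y \<Longrightarrow> leib_eq (fmul z x) (fmul (z::'k::field fl) y)"
proof (induction z)
  case (Cons e z)
  obtain c w where e: "e = (c, w)" by (cases e)
  have "lc (fmul [e] x) - lc (fmul [e] y) = (\<lambda>p. c * lmult w (lc x - lc y) p)"
    by (simp add: e lc_fmul_singleton_left fun_eq_iff lmult_diff right_diff_distrib)
  moreover have "pvalid w"
    using Cons.prems by (simp add: fvalid_Cons e)
  ultimately have "leib_eq (fmul [e] x) (fmul [e] y)"
    using leib_ideal_scale[OF leib_ideal_lmult] Cons.prems(2) unfolding leib_eq_def by simp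
  moreover have "leib_eq (fmul z x) (fmul z y)"
    using Cons by (simp add: fvalid_Cons)
  ultimately show ?case
    by (metis leib_eq_append fmul_Cons_left)
qed simp

lemma leib_eq_fmul_right:
  "fvalid z \<Longrightarrow> leib_eq x y \<Longrightarrow> leib_eq (fmul x z) (fmul y (z::'k::field fl))"
proof (induction z)
  case (Cons e z)
  obtain c w where e: "e = (c, w)" by (cases e)
  have "lc (fmul x [e]) - lc (fmul y [e]) = (\<lambda>p. c * rmult w (lc x - lc y) p)"
    by (simp add: e lc_fmul_singleton_right fun_eq_iff rmult_diff algebra_simps)
  moreover have "pvalid w"
    using Cons.prems by (simp add: fvalid_Cons e)
  ultimately have "lc (fmul x [e]) - lc (fmul y [e]) \<in> leib_ideal"
    using leib_ideal_scale[OF leib_ideal_rmult] Cons.prems(2) unfolding leib_eq_def by simp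
  moreover have "lc (fmul x z) - lc (fmul y z) \<in> leib_ideal"
    using Cons by (simp add: fvalid_Cons leib_eq_def)
  ultimately show ?case
    unfolding leib_eq_def lc_fmul_Cons_right[of x e z] lc_fmul_Cons_right[of y e z]
    using leib_ideal_add by (fastforce simp: algebra_simps)
qed simp

lemma lc_fmul_cong:
  assumes "lc x = lc x'" and "lc y = lc y'"
  shows "lc (fmul x y) = lc (fmul x' (y' :: 'k::comm_semiring_0 fl))"
proof -
  have "lc (fmul z y) = lc (fmul z y')" for z
  proof (induction z)
    case (Cons e z)
    obtain c w where e: "e = (c, w)" by (cases e)
    show ?case
      using Cons by (simp add: e fmul_Cons_left[of "(c, w)" z] lc_fmul_singleton_left assms(2))
  qed simp
  moreover have "lc (fmul x z) = lc (fmul x' z)" for z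
  proof (induction z)
    case (Cons e z)
    obtain c w where e: "e = (c, w)" by (cases e)
    show ?case
      using Cons
      by (simp add: e lc_fmul_Cons_right[of _ "(c, w)" z] lc_fmul_singleton_right assms(1))
  qed simp
  ultimately show ?thesis by simp
qed

section \<open>The defining relations\<close>

lemma fmul_idempotents_id:
  assumes "\<forall>e \<in> set r. fst (snd e) = n \<and> ptgt (snd e) = t"
  shows "fmul [(1::'k::monoid_mult, (t, []))] (fmul r [(1, (n, []))]) = r"
  using assms
proof (induction r)
  case (Cons e r)
  obtain c m ws where e: "e = (c, m, ws)" by (cases e)
  have "fmul (e # r) [(1, (n, []))] = fmul [e] [(1, (n, []))] @ fmul r [(1, (n, []))]"
    by (rule fmul_Cons_left)
  moreover have "fmul [(1, (t, []))] ((c, m, ws) # fmul r [(1, (n, []))])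
      = fmul [(1, (t, []))] [(c, m, ws)] @ fmul [(1, (t, []))] (fmul r [(1, (n, []))])"
    by (rule fmul_singleton_Cons)
  ultimately show ?case using Cons by (auto simp: e fmul_singletons)
qed simp

lemma lc_relator_in_leib_ideal:
  "r \<in> leib_rel \<Longrightarrow> \<forall>e \<in> set r. fst (snd e) = n \<and> ptgt (snd e) = t \<Longrightarrow> lc r \<in> leib_ideal"
  using leib_ideal.gen[of r "(t, [])" "(n, [])"] fmul_idempotents_id[of r n t] by simp

lemma leib_eq_relator:
  "A @ fneg B \<in> leib_rel \<Longrightarrow> \<forall>e \<in> set (A @ fneg B). fst (snd e) = n \<and> ptgt (snd e) = t
    \<Longrightarrow> leib_eq A B"
  using lc_relator_in_leib_ideal[of "A @ fneg B" n t] by (simp add: leib_eq_def)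

lemma leib_eq_relator3:
  "A @ fneg B @ C \<in> leib_rel \<Longrightarrow> \<forall>e \<in> set (A @ fneg B @ C). fst (snd e) = n \<and> ptgt (snd e) = t
    \<Longrightarrow> leib_eq (A @ C) B"
  using lc_relator_in_leib_ideal[of "A @ fneg B @ C" n t] by (simp add: leib_eq_def algebra_simps)

lemma leib_eq_mag:
  "i < j \<Longrightarrow> j \<le> n \<Longrightarrow>
    leib_eq (mon n [D (Suc n) i, D n j] :: 'k::field fl) (mon n [D (Suc n) (Suc j), D n i])"
  by (rule leib_eq_relator[OF leib_rel.mag, of _ _ _ n "Suc (Suc n)"]) (auto simp: mon_def fneg_def)

lemma leib_eq_sym_comm:
  "i < n \<Longrightarrow> j < n \<Longrightarrow> i + 2 \<le> j \<or> j + 2 \<le> i \<Longrightarrow>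
    leib_eq (mon n [X n i, X n j] :: 'k::field fl) (mon n [X n j, X n i])"
  by (rule leib_eq_relator[OF leib_rel.sym_comm, of _ _ _ n n]) (auto simp: mon_def fneg_def)

lemma leib_eq_sym_braid:
  "Suc i < n \<Longrightarrow>
    leib_eq (mon n [X n i, X n (Suc i), X n i] :: 'k::field fl) (mon n [X n (Suc i), X n i, X n (Suc i)])"
  by (rule leib_eq_relator[OF leib_rel.sym_braid, of _ _ n n]) (auto simp: mon_def fneg_def)

lemma leib_eq_sym_inv: "i < n \<Longrightarrow> leib_eq (mon n [X n i, X n i] :: 'k::field fl) (mon n [])"
  by (rule leib_eq_relator[OF leib_rel.sym_inv, of _ _ n n]) (auto simp: mon_def fneg_def)

lemma leib_eq_zeta1:
  "i < j \<Longrightarrow> j < n \<Longrightarrow>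
    leib_eq (mon n [D n i, X n j] :: 'k::field fl) (mon n [X (Suc n) (Suc j), D n i])"
  by (rule leib_eq_relator[OF leib_rel.zeta1, of _ _ _ n "Suc n"]) (auto simp: mon_def fneg_def)

lemma leib_eq_zeta2:
  "i < n \<Longrightarrow>
    leib_eq (mon n [D n i, X n i] :: 'k::field fl) (mon n [X (Suc n) (Suc i), X (Suc n) i, D n (Suc i)])"
  by (rule leib_eq_relator[OF leib_rel.zeta2, of _ _ n "Suc n"]) (auto simp: mon_def fneg_def)

lemma leib_eq_zeta3:
  "j < n \<Longrightarrow>
    leib_eq (mon n [D n (Suc j), X n j] :: 'k::field fl) (mon n [X (Suc n) j, X (Suc n) (Suc j), D n j])"
  by (rule leib_eq_relator[OF leib_rel.zeta3, of _ _ n "Suc n"]) (auto simp: mon_def fneg_def)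

lemma leib_eq_zeta4:
  "Suc j < i \<Longrightarrow> i \<le> n \<Longrightarrow>
    leib_eq (mon n [D n i, X n j] :: 'k::field fl) (mon n [X (Suc n) j, D n i])"
  by (rule leib_eq_relator[OF leib_rel.zeta4, of _ _ _ n "Suc n"]) (auto simp: mon_def fneg_def)

lemma leib_eq_leib:
  "j \<le> n \<Longrightarrow>
    leib_eq (mon n [D (Suc n) (Suc j), D n j] @ mon n [X (Suc (Suc n)) (Suc j), D (Suc n) j, D n j]
      :: 'k::field fl) (mon n [D (Suc n) j, D n j])"
  by (rule leib_eq_relator3[OF leib_rel.leib, of _ _ n "Suc (Suc n)"]) (auto simp: mon_def fneg_def)

section \<open>Rewriting summands\<close>

lemma fmul_mon_mon [simp]:
  "fmul (mon a ws) (mon b vs :: 'k::monoid_mult fl) = (if ptgt (b, vs) = a then mon b (ws @ vs) else [])"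
  by (simp add: mon_def fmul_singletons)

lemma fmul_mon_fmul_mon [simp]:
  "fmul (mon a ws) (fmul (mon b vs) (z :: 'k::monoid_mult fl))
     = (if ptgt (b, vs) = a then fmul (mon b (ws @ vs)) z else [])"
  by (simp only: fmul_assoc[symmetric] fmul_mon_mon) simp

lemma fmul_mon_append [simp]: "fmul (mon a ws) (y @ z) = fmul (mon a ws) y @ fmul (mon a ws) z"
  by (simp add: mon_def fmul_singleton_append)

lemma lc_fmul_fmul_append_right:
  "lc (fmul u (fmul x (y @ z)))
     = lc (fmul u (fmul x y)) + lc (fmul u (fmul x (z :: 'k::comm_semiring_0 fl)))"
  by (simp only: fmul_assoc[symmetric] lc_fmul_append_right)

lemma lc_fmul_fmul_fmul_append_right:
  "lc (fmul u (fmul v (fmul x (y @ z))))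
     = lc (fmul u (fmul v (fmul x y))) + lc (fmul u (fmul v (fmul x (z :: 'k::comm_semiring_0 fl))))"
  by (simp only: fmul_assoc[symmetric] lc_fmul_append_right)

text \<open>Normal form of a formal sum up to equality of coefficient functions: products nested to the
  right, sums distributed out, summands in a canonical order. A computation in Leib is then a
  chain of steps, each replacing one summand by means of a relation.\<close>

lemmas lc_normalize = fmul_assoc lc_fmul_append_right
  lc_fmul_fmul_append_right lc_fmul_fmul_fmul_append_right add_ac

lemma leib_eq_rewrite:
  "leib_eq x y \<Longrightarrow> lc A = lc (z @ x) \<Longrightarrow> lc B = lc (z @ y) \<Longrightarrow> leib_eq A B"
  by (meson leib_eq_append leib_eq_if_lc_eq leib_eq_refl leib_eq_sym leib_eq_trans)

lemma leib_eq_rewrite_left: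
  "leib_eq x y \<Longrightarrow> fvalid u \<Longrightarrow> lc A = lc (z @ fmul u x) \<Longrightarrow> lc B = lc (z @ fmul u y)
    \<Longrightarrow> leib_eq A (B :: 'k::field fl)"
  by (meson leib_eq_rewrite leib_eq_fmul_left)

lemma leib_eq_rewrite_right:
  "leib_eq x y \<Longrightarrow> fvalid v \<Longrightarrow> lc A = lc (z @ fmul x v) \<Longrightarrow> lc B = lc (z @ fmul y v)
    \<Longrightarrow> leib_eq A (B :: 'k::field fl)"
  by (meson leib_eq_rewrite leib_eq_fmul_right)

section \<open>The recurrence for \<open>\<rho>\<close>\<close>

text \<open>\<open>rho_rec n (Suc j)\<close> is \<open>\<rho>\<^sup>n\<^sub>j\<close>, computed by the recurrence
  \<open>\<rho>\<^sup>n\<^sub>j = \<partial>\<^sup>n\<^sub>j + \<chi>\<^sup>n\<^sup>+\<^sup>1\<^sub>j \<rho>\<^sup>n\<^sub>j\<^sub>-\<^sub>1\<close>; the shift by one accommodates \<open>\<rho>\<^sup>n\<^sub>-\<^sub>1 = 0\<close>.\<close>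

fun rho_rec :: "nat \<Rightarrow> nat \<Rightarrow> 'k::monoid_mult fl" where
  "rho_rec n 0 = []"
| "rho_rec n (Suc j) = mon n [D n j] @ fmul (mon (Suc n) [X (Suc n) j]) (rho_rec n j)"

declare rho_rec.simps(2) [simp del]

lemma fvalid_rho_rec [simp]: "j \<le> Suc n \<Longrightarrow> fvalid (rho_rec n j)"
  by (induction j) (simp_all add: rho_rec.simps(2) fvalid_fmul)

lemma rho_rec_X_above:
  "k \<le> i \<Longrightarrow> i < n \<Longrightarrow>
    leib_eq (fmul (rho_rec n k) (mon n [X n i]))
      (fmul (mon (Suc n) [X (Suc n) (Suc i)]) (rho_rec n k) :: 'k::field fl)"
proof (induction k)
  case (Suc k)
  then have IH: "leib_eq (fmul (rho_rec n k) (mon n [X n i]))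
      (fmul (mon (Suc n) [X (Suc n) (Suc i)]) (rho_rec n k) :: 'k fl)"
    by simp
  let ?x = "mon (Suc n) [X (Suc n) k] :: 'k fl"
  let ?z = "mon n [X (Suc n) (Suc i), D n k] :: 'k fl"
  have "leib_eq (fmul (rho_rec n (Suc k)) (mon n [X n i]))
      (?z @ fmul ?x (fmul (rho_rec n k) (mon n [X n i])))"
    by (rule leib_eq_rewrite[OF leib_eq_zeta1[of k i n]])
      (use Suc in \<open>simp_all add: rho_rec.simps(2) lc_normalize\<close>)
  also have "leib_eq \<dots> (?z @ fmul ?x (fmul (mon (Suc n) [X (Suc n) (Suc i)]) (rho_rec n k)))"
    by (rule leib_eq_rewrite_left[OF IH, where u = ?x and z = ?z])
      (use Suc in \<open>simp_all add: lc_normalize\<close>)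
  also have "leib_eq \<dots> (?z @ fmul (mon (Suc n) [X (Suc n) (Suc i), X (Suc n) k]) (rho_rec n k))"
    by (rule leib_eq_rewrite_right[OF leib_eq_sym_comm[of k "Suc n" "Suc i"], where z = ?z])
      (use Suc in \<open>simp_all add: lc_normalize\<close>)
  also have "leib_eq \<dots> (fmul (mon (Suc n) [X (Suc n) (Suc i)]) (rho_rec n (Suc k)))"
    by (rule leib_eq_if_lc_eq) (simp add: lc_normalize rho_rec.simps(2))
  finally show ?case .
qed simp

lemma D_rho_rec_commute:
  "k \<le> m \<Longrightarrow> m \<le> n \<Longrightarrow>
    leib_eq (fmul (mon (Suc n) [D (Suc n) (Suc m)]) (rho_rec n k))
      (fmul (rho_rec (Suc n) k) (mon n [D n m]) :: 'k::field fl)"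
proof (induction k)
  case (Suc k)
  then have IH: "leib_eq (fmul (mon (Suc n) [D (Suc n) (Suc m)]) (rho_rec n k))
      (fmul (rho_rec (Suc n) k) (mon n [D n m]) :: 'k fl)"
    by simp
  let ?u = "mon (Suc (Suc n)) [X (Suc (Suc n)) k] :: 'k fl"
  let ?z = "mon n [D (Suc n) k, D n m] :: 'k fl"
  have "leib_eq (fmul (mon (Suc n) [D (Suc n) (Suc m)]) (rho_rec n (Suc k)))
      (?z @ fmul (mon (Suc n) [D (Suc n) (Suc m), X (Suc n) k]) (rho_rec n k))"
    by (rule leib_eq_rewrite[OF leib_eq_sym[OF leib_eq_mag[of k m n]]])
      (use Suc in \<open>simp_all add: rho_rec.simps(2) lc_normalize\<close>)
  also have "leib_eq \<dots> (?z @ fmul (mon (Suc n) [X (Suc (Suc n)) k, D (Suc n) (Suc m)]) (rho_rec n k))"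
    by (rule leib_eq_rewrite_right[OF leib_eq_zeta4[of k "Suc m" "Suc n"], where z = ?z])
      (use Suc in \<open>simp_all add: lc_normalize\<close>)
  also have "leib_eq \<dots> (?z @ fmul ?u (fmul (rho_rec (Suc n) k) (mon n [D n m])))"
    by (rule leib_eq_rewrite_left[OF IH, where u = ?u and z = ?z])
      (use Suc in \<open>simp_all add: lc_normalize\<close>)
  also have "leib_eq \<dots> (fmul (rho_rec (Suc n) (Suc k)) (mon n [D n m]))"
    by (rule leib_eq_if_lc_eq) (simp add: lc_normalize rho_rec.simps(2))
  finally show ?case .
qed simp

lemma rho_rec_X_diag:
  assumes "i < n"
  shows "leib_eq (fmul (rho_rec n (Suc (Suc i))) (mon n [X n i]))
    (fmul (mon (Suc n) [X (Suc n) i]) (rho_rec n (Suc (Suc i))) :: 'k::field fl)"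
proof -
  let ?y = "mon (Suc n) [X (Suc n) (Suc i), X (Suc n) i] :: 'k fl"
  let ?A = "mon n [X (Suc n) (Suc i), D n i, X n i] @ fmul ?y (fmul (rho_rec n i) (mon n [X n i]))"
  let ?B = "mon n [X (Suc n) i, X (Suc n) (Suc i), D n i] :: 'k fl"
  let ?C = "mon n [X (Suc n) i, D n (Suc i)] :: 'k fl"
  have "leib_eq (fmul (rho_rec n (Suc (Suc i))) (mon n [X n i])) (?A @ ?B)"
    by (rule leib_eq_rewrite[OF leib_eq_zeta3[of i n], where z = ?A])
      (use assms in \<open>simp_all add: rho_rec.simps(2) lc_normalize\<close>)
  also have "leib_eq \<dots> (fmul (mon (Suc n) [X (Suc n) (Suc i)])
      (mon n [X (Suc n) (Suc i), X (Suc n) i, D n (Suc i)])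
      @ fmul ?y (fmul (rho_rec n i) (mon n [X n i])) @ ?B)"
    by (rule leib_eq_rewrite_left[OF leib_eq_zeta2[of i n],
          where u = "mon (Suc n) [X (Suc n) (Suc i)]" and z = "fmul ?y (fmul (rho_rec n i) (mon n [X n i])) @ ?B"])
      (use assms in \<open>simp_all add: lc_normalize\<close>)
  also have "leib_eq \<dots> (?C @ fmul ?y (fmul (rho_rec n i) (mon n [X n i])) @ ?B)"
    by (rule leib_eq_rewrite_right[OF leib_eq_sym_inv[of "Suc i" "Suc n"],
          where v = ?C and z = "fmul ?y (fmul (rho_rec n i) (mon n [X n i])) @ ?B"])
      (use assms in \<open>simp_all add: lc_normalize\<close>)
  also have "leib_eq \<dots> (?C @ fmul ?y (fmul (mon (Suc n) [X (Suc n) (Suc i)]) (rho_rec n i)) @ ?B)"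
    by (rule leib_eq_rewrite_left[OF rho_rec_X_above[of i i n], where u = ?y and z = "?C @ ?B"])
      (use assms in \<open>simp_all add: lc_normalize\<close>)
  also have "leib_eq \<dots>
      (?C @ fmul (mon (Suc n) [X (Suc n) i, X (Suc n) (Suc i), X (Suc n) i]) (rho_rec n i) @ ?B)"
    by (rule leib_eq_rewrite_right[OF leib_eq_sym[OF leib_eq_sym_braid[of i "Suc n"]],
          where z = "?C @ ?B"])
      (use assms in \<open>simp_all add: lc_normalize\<close>)
  also have "leib_eq \<dots> (fmul (mon (Suc n) [X (Suc n) i]) (rho_rec n (Suc (Suc i))))"
    by (rule leib_eq_if_lc_eq) (simp add: lc_normalize rho_rec.simps(2))
  finally show ?thesis .
qed

lemma rho_rec_X_below:
  assumes "Suc i \<le> k" and "k \<le> n"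
  shows "leib_eq (fmul (rho_rec n (Suc k)) (mon n [X n i]))
    (fmul (mon (Suc n) [X (Suc n) i]) (rho_rec n (Suc k)) :: 'k::field fl)"
  using assms
proof (induction k rule: dec_induct)
  case base
  then show ?case by (simp add: rho_rec_X_diag)
next
  case (step k)
  then have IH: "leib_eq (fmul (rho_rec n (Suc k)) (mon n [X n i]))
      (fmul (mon (Suc n) [X (Suc n) i]) (rho_rec n (Suc k)) :: 'k fl)"
    by simp
  let ?u = "mon (Suc n) [X (Suc n) (Suc k)] :: 'k fl"
  let ?z = "mon n [X (Suc n) i, D n (Suc k)] :: 'k fl"
  have "leib_eq (fmul (rho_rec n (Suc (Suc k))) (mon n [X n i]))
      (?z @ fmul ?u (fmul (rho_rec n (Suc k)) (mon n [X n i])))"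
    by (rule leib_eq_rewrite[OF leib_eq_zeta4[of i "Suc k" n]])
      (use step in \<open>simp_all add: rho_rec.simps(2)[of n "Suc k"] lc_normalize\<close>)
  also have "leib_eq \<dots> (?z @ fmul ?u (fmul (mon (Suc n) [X (Suc n) i]) (rho_rec n (Suc k))))"
    by (rule leib_eq_rewrite_left[OF IH, where u = ?u and z = ?z])
      (use step in \<open>simp_all add: lc_normalize\<close>)
  also have "leib_eq \<dots> (?z @ fmul (mon (Suc n) [X (Suc n) i, X (Suc n) (Suc k)]) (rho_rec n (Suc k)))"
    by (rule leib_eq_rewrite_right[OF leib_eq_sym_comm[of "Suc k" "Suc n" i], where z = ?z])
      (use step in \<open>simp_all add: lc_normalize\<close>)
  also have "leib_eq \<dots> (fmul (mon (Suc n) [X (Suc n) i]) (rho_rec n (Suc (Suc k))))"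
    by (rule leib_eq_if_lc_eq) (simp add: lc_normalize rho_rec.simps(2)[of n "Suc k"])
  finally show ?case .
qed

lemma D_rho_rec_diag:
  assumes "j \<le> n"
  shows "leib_eq (fmul (mon (Suc n) [D (Suc n) j]) (rho_rec n (Suc j)))
    (fmul (rho_rec (Suc n) (Suc (Suc j))) (mon n [D n j]) :: 'k::field fl)"
proof (cases j)
  case 0
  show ?thesis unfolding 0
    by (rule leib_eq_rewrite[OF leib_eq_sym[OF leib_eq_leib[of 0 n]], where z = "[]"])
      (simp_all add: lc_normalize rho_rec.simps(2))
next
  case (Suc k)
  let ?u = "mon (Suc (Suc n)) [X (Suc (Suc n)) (Suc (Suc k)), X (Suc (Suc n)) (Suc k)] :: 'k fl"
  let ?w = "mon n [D (Suc n) (Suc k), D n (Suc k)] :: 'k fl"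
  have "leib_eq (fmul (mon (Suc n) [D (Suc n) (Suc k)]) (rho_rec n (Suc (Suc k))))
      (?w @ fmul (mon (Suc n) [X (Suc (Suc n)) (Suc (Suc k)), X (Suc (Suc n)) (Suc k),
        D (Suc n) (Suc (Suc k))]) (rho_rec n (Suc k)))"
    by (rule leib_eq_rewrite_right[OF leib_eq_zeta2[of "Suc k" "Suc n"], where z = ?w])
      (use assms Suc in \<open>simp_all add: rho_rec.simps(2)[of n "Suc k"] lc_normalize\<close>)
  also have "leib_eq \<dots> (?w @ fmul (mon (Suc (Suc n)) [X (Suc (Suc n)) (Suc (Suc k))])
      (fmul (mon (Suc (Suc n)) [X (Suc (Suc n)) (Suc k)])
        (fmul (rho_rec (Suc n) (Suc k)) (mon n [D n (Suc k)]))))"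
    by (rule leib_eq_rewrite_left[OF D_rho_rec_commute[of "Suc k" "Suc k" n],
          where u = ?u and z = ?w])
      (use assms Suc in \<open>simp_all add: lc_normalize\<close>)
  also have "leib_eq \<dots> ((mon n [D (Suc n) (Suc (Suc k)), D n (Suc k)]
      @ mon n [X (Suc (Suc n)) (Suc (Suc k)), D (Suc n) (Suc k), D n (Suc k)])
      @ fmul ?u (fmul (rho_rec (Suc n) (Suc k)) (mon n [D n (Suc k)])))"
    by (rule leib_eq_rewrite[OF leib_eq_sym[OF leib_eq_leib[of "Suc k" n]],
          where z = "fmul ?u (fmul (rho_rec (Suc n) (Suc k)) (mon n [D n (Suc k)]))"])
      (use assms Suc in \<open>simp_all add: lc_normalize\<close>)
  also have "leib_eq \<dots> (fmul (rho_rec (Suc n) (Suc (Suc (Suc k)))) (mon n [D n (Suc k)]))"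
    by (rule leib_eq_if_lc_eq)
      (simp add: lc_normalize rho_rec.simps(2)[of "Suc n" "Suc (Suc k)"]
        rho_rec.simps(2)[of "Suc n" "Suc k"])
  finally show ?thesis unfolding Suc .
qed

lemma D_rho_rec:
  assumes "i \<le> j" and "j \<le> n"
  shows "leib_eq (fmul (mon (Suc n) [D (Suc n) i]) (rho_rec n (Suc j)))
    (fmul (rho_rec (Suc n) (Suc (Suc j))) (mon n [D n i]) :: 'k::field fl)"
  using assms
proof (induction j rule: dec_induct)
  case base
  then show ?case by (rule D_rho_rec_diag)
next
  case (step j)
  then have IH: "leib_eq (fmul (mon (Suc n) [D (Suc n) i]) (rho_rec n (Suc j)))
      (fmul (rho_rec (Suc n) (Suc (Suc j))) (mon n [D n i]) :: 'k fl)"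
    by simp
  let ?u = "mon (Suc (Suc n)) [X (Suc (Suc n)) (Suc (Suc j))] :: 'k fl"
  let ?z = "mon n [D (Suc n) (Suc (Suc j)), D n i] :: 'k fl"
  have "leib_eq (fmul (mon (Suc n) [D (Suc n) i]) (rho_rec n (Suc (Suc j))))
      (?z @ fmul (mon (Suc n) [D (Suc n) i, X (Suc n) (Suc j)]) (rho_rec n (Suc j)))"
    by (rule leib_eq_rewrite[OF leib_eq_mag[of i "Suc j" n]])
      (use step in \<open>simp_all add: rho_rec.simps(2)[of n "Suc j"] lc_normalize\<close>)
  also have "leib_eq \<dots>
      (?z @ fmul (mon (Suc n) [X (Suc (Suc n)) (Suc (Suc j)), D (Suc n) i]) (rho_rec n (Suc j)))"
    by (rule leib_eq_rewrite_right[OF leib_eq_zeta1[of i "Suc j" "Suc n"], where z = ?z])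
      (use step in \<open>simp_all add: lc_normalize\<close>)
  also have "leib_eq \<dots> (?z @ fmul ?u (fmul (rho_rec (Suc n) (Suc (Suc j))) (mon n [D n i])))"
    by (rule leib_eq_rewrite_left[OF IH, where u = ?u and z = ?z])
      (use step in \<open>simp_all add: lc_normalize\<close>)
  also have "leib_eq \<dots> (fmul (rho_rec (Suc n) (Suc (Suc (Suc j)))) (mon n [D n i]))"
    by (rule leib_eq_if_lc_eq) (simp add: lc_normalize rho_rec.simps(2)[of "Suc n" "Suc (Suc j)"])
  finally show ?case .
qed

lemma rho_rec_mul_rho_rec:
  "i \<le> Suc j \<Longrightarrow> j \<le> n \<Longrightarrow>
    leib_eq (fmul (rho_rec (Suc n) i) (rho_rec n (Suc j)))
      (fmul (rho_rec (Suc n) (Suc (Suc j))) (rho_rec n i) :: 'k::field fl)"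
proof (induction i)
  case (Suc i)
  then have ij: "i \<le> j" and jn: "j \<le> n" by auto
  have IH: "leib_eq (fmul (rho_rec (Suc n) i) (rho_rec n (Suc j)))
      (fmul (rho_rec (Suc n) (Suc (Suc j))) (rho_rec n i) :: 'k fl)"
    using Suc by simp
  let ?u = "mon (Suc (Suc n)) [X (Suc (Suc n)) i] :: 'k fl"
  let ?z = "fmul (rho_rec (Suc n) (Suc (Suc j))) (mon n [D n i]) :: 'k fl"
  have "leib_eq (fmul (rho_rec (Suc n) (Suc i)) (rho_rec n (Suc j)))
      (?z @ fmul ?u (fmul (rho_rec (Suc n) i) (rho_rec n (Suc j))))"
    by (rule leib_eq_rewrite[OF D_rho_rec[OF ij jn]])
      (simp_all add: lc_normalize rho_rec.simps(2)[of "Suc n" i])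
  also have "leib_eq \<dots> (?z @ fmul ?u (fmul (rho_rec (Suc n) (Suc (Suc j))) (rho_rec n i)))"
    by (rule leib_eq_rewrite_left[OF IH, where u = ?u and z = ?z])
      (use ij jn in \<open>simp_all add: lc_normalize\<close>)
  also have "leib_eq \<dots> (?z @ fmul (rho_rec (Suc n) (Suc (Suc j)))
      (fmul (mon (Suc n) [X (Suc n) i]) (rho_rec n i)))"
    by (rule leib_eq_rewrite_right[OF leib_eq_sym[OF rho_rec_X_below[of i "Suc j" "Suc n"]],
          where v = "rho_rec n i" and z = ?z])
      (use ij jn in \<open>simp_all add: lc_normalize\<close>)
  also have "leib_eq \<dots> (fmul (rho_rec (Suc n) (Suc (Suc j))) (rho_rec n (Suc i)))"
    by (rule leib_eq_if_lc_eq) (simp add: lc_normalize rho_rec.simps(2)[of n i])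
  finally show ?case .
qed simp

definition rho_tail :: "nat \<Rightarrow> nat \<Rightarrow> 'k::one fl" where
  "rho_tail n j =
    concat (map (\<lambda>a. mon n (map (X (Suc n)) (rev [a..<Suc j]) @ [D n (a - 1)])) [1..<Suc j])"

lemma rho_eq_D_rho_tail: "rho n j = mon n [D n j] @ rho_tail n j"
  by (simp add: rho_def rho_tail_def)

lemma fmul_mon_concat:
  "fmul (mon a ws) (concat xs) = concat (map (fmul (mon a ws)) (xs :: 'k::monoid_mult fl list))"
  by (induction xs) simp_all

lemma ptgt_X_D: "ptgt (n, map (X (Suc n)) l @ [D n b]) = Suc n"
  by (cases l) auto

lemma rho_tail_Suc:
  "rho_tail n (Suc j) = fmul (mon (Suc n) [X (Suc n) (Suc j)]) (rho_tail n j)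
     @ (mon n [X (Suc n) (Suc j), D n j] :: 'k::monoid_mult fl)"
proof -
  have "mon n (map (X (Suc n)) (rev [a..<Suc (Suc j)]) @ [D n (a - 1)])
      = (fmul (mon (Suc n) [X (Suc n) (Suc j)])
          (mon n (map (X (Suc n)) (rev [a..<Suc j]) @ [D n (a - 1)])) :: 'k fl)"
    if "a \<in> set [1..<Suc j]" for a
  proof -
    from that have "a \<le> Suc j" by auto
    then have "rev [a..<Suc (Suc j)] = Suc j # rev [a..<Suc j]" by simp
    then show ?thesis by (simp add: ptgt_X_D)
  qed
  then have "concat (map (\<lambda>a. mon n (map (X (Suc n)) (rev [a..<Suc (Suc j)]) @ [D n (a - 1)]))
        [1..<Suc j])
      = (concat (map (\<lambda>a. fmul (mon (Suc n) [X (Suc n) (Suc j)])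
          (mon n (map (X (Suc n)) (rev [a..<Suc j]) @ [D n (a - 1)]))) [1..<Suc j]) :: 'k fl)"
    by (intro arg_cong[where f = concat] map_cong) simp_all
  then show ?thesis
    by (simp add: rho_tail_def fmul_mon_concat comp_def)
qed

lemma lc_rho_eq_rho_rec: "lc (rho n j :: 'k::comm_semiring_1 fl) = lc (rho_rec n (Suc j))"
proof (induction j)
  case 0
  then show ?case by (simp add: rho_eq_D_rho_tail rho_tail_def rho_rec.simps(2))
next
  case (Suc j)
  have "lc (fmul (mon (Suc n) [X (Suc n) (Suc j)]) (rho_rec n (Suc j)) :: 'k fl)
      = lc (fmul (mon (Suc n) [X (Suc n) (Suc j)]) (rho n j))"
    using lc_fmul_cong[OF refl Suc.IH[symmetric]] by simp
  then show ?case
    by (simp add: rho_eq_D_rho_tail rho_tail_Suc rho_rec.simps(2)[of n "Suc j"] add_ac)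
qed

theorem proposition3p9:
  fixes n i j :: nat
  assumes "i \<le> j" and "j \<le> n"
  shows "leib_eq (fmul (rho (Suc n) i) (rho n j) :: 'k::field fl)
                 (fmul (rho (Suc n) (Suc j)) (rho n i))"
proof -
  have "leib_eq (fmul (rho_rec (Suc n) (Suc i)) (rho_rec n (Suc j)))
      (fmul (rho_rec (Suc n) (Suc (Suc j))) (rho_rec n (Suc i)) :: 'k fl)"
    using rho_rec_mul_rho_rec[of "Suc i" j n] assms by simp
  moreover have "lc (fmul (rho (Suc n) i) (rho n j) :: 'k fl)
      = lc (fmul (rho_rec (Suc n) (Suc i)) (rho_rec n (Suc j)))"
    and "lc (fmul (rho (Suc n) (Suc j)) (rho n i) :: 'k fl)
      = lc (fmul (rho_rec (Suc n) (Suc (Suc j))) (rho_rec n (Suc i)))"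
    by (intro lc_fmul_cong lc_rho_eq_rho_rec)+
  ultimately show ?thesis
    unfolding leib_eq_def by simp
qed

end
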